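(* Every metric family with weak finite decomposition complexity also has straight finite decomposition complexity. In fact, the collection $s\mathfrak{D}$ of metric families with straight finite decomposition complexity is stable under weak decomposition.
   Context: A metric family is a set of metric spaces; it is uniformly bounded if $\sup\{\mathrm{diam}(Z): Z\in\mathcal{Z}\}<\infty$. Subsets $A,B$ are $r$-disjoint if $d(A,B)>r$. A $(k,r)$-decomposition of a metric space $X$ over a metric family $\mathcal{Y}$ is a decomposition $X=X_0\cup X_1\cup\cdots\cup X_{k-1}$ with each $X_i=\bigsqcup_j X_{ij}$ a union of pairwise $r$-disjoint subsets and each $X_{ij}\in\mathcal{Y}$. A family $\mathcal{X}$ is $(k,r)$-decomposable over $\mathcal{Y}$ if every member of $\mathcal{X}$ admits a $(k,r)$-decomposition over $\mathcal{Y}$; for $k=2$ this is called $r$-decomposable. For a collection $\mathfrak{U}$ of metric families, $\mathcal{X}$ is $k$-decomposable over $\mathfrak{U}$ if for every $r>0$ there is $\mathcal{Y}_r\in\mathfrak{U}$ such that $\mathcal{X}$ is $(k,r)$-decomposable over $\mathcal{Y}_r$; $\mathcal{X}$ is weakly decomposable over $\mathfrak{U}$ if it is $k$-decomposable over $\mathfrak{U}$ for some $k\in\mathbb{N}$; $\mathfrak{U}$ is stable under weak decomposition if every family weakly decomposable over $\mathfrak{U}$ lies in $\mathfrak{U}$. The collection of families with weak finite decomposition complexity (wFDC) is the smallest collection containing all uniformly bounded families and stable under weak decomposition. A metric family $\mathcal{X}$ has straight finite decomposition complexity (sFDC) if for every sequence $R_1<R_2<\cdots$ of positive numbers there exist $n\in\mathbb{N}$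 and metric families $\mathcal{X}_0=\mathcal{X},\mathcal{X}_1,\dots,\mathcal{X}_n$ such that $\mathcal{X}_i$ is $R_{i+1}$-decomposable over $\mathcal{X}_{i+1}$ for each $i<n$ and $\mathcal{X}_n$ is uniformly bounded; $s\mathfrak{D}$ denotes the collection of such families. *)

theory Defs
  imports "HOL-Analysis.Analysis"
begin

type_synonym 'a mfamily = "'a metric set"

definition uniformly_bounded :: "'a mfamily \<Rightarrow> bool" where
  "uniformly_bounded Z \<longleftrightarrow>
     (\<exists>B::real. \<forall>m\<in>Z. \<forall>x\<in>mspace m. \<forall>y\<in>mspace m. mdist m x y \<le> B)"

definition r_disjoint :: "'a metric \<Rightarrow> real \<Rightarrow> 'a set \<Rightarrow> 'a set \<Rightarrow> bool" where
  "r_disjoint m r A B \<longleftrightarrow>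
     A = {} \<or> B = {} \<or> Inf {mdist m a b | a b. a \<in> A \<and> b \<in> B} > r"

definition kr_decomposition :: "nat \<Rightarrow> real \<Rightarrow> 'a metric \<Rightarrow> 'a mfamily \<Rightarrow> bool" where
  "kr_decomposition k r X Y \<longleftrightarrow>
     (\<exists>U :: nat \<Rightarrow> 'a set set.
        mspace X = (\<Union>i<k. \<Union>(U i)) \<and>
        (\<forall>i<k. (\<forall>A\<in>U i. \<forall>B\<in>U i. A \<noteq> B \<longrightarrow> r_disjoint X r A B) \<and>
               (\<forall>A\<in>U i. A \<subseteq> mspace X \<and> submetric X A \<in> Y)))"

definition kr_decomposable :: "nat \<Rightarrow> real \<Rightarrow> 'a mfamily \<Rightarrow> 'a mfamily \<Rightarrow> bool" where
  "kr_decomposable k r XX Y \<longleftrightarrow> (\<forall>X\<in>XX. kr_decomposition k r X Y)"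

abbreviation r_decomposable :: "real \<Rightarrow> 'a mfamily \<Rightarrow> 'a mfamily \<Rightarrow> bool" where
  "r_decomposable r XX Y \<equiv> kr_decomposable 2 r XX Y"

definition k_decomposable_over :: "nat \<Rightarrow> 'a mfamily \<Rightarrow> 'a mfamily set \<Rightarrow> bool" where
  "k_decomposable_over k XX UU \<longleftrightarrow> (\<forall>r>0. \<exists>Y\<in>UU. kr_decomposable k r XX Y)"

definition weakly_decomposable_over :: "'a mfamily \<Rightarrow> 'a mfamily set \<Rightarrow> bool" where
  "weakly_decomposable_over XX UU \<longleftrightarrow> (\<exists>k::nat. k_decomposable_over k XX UU)"

definition stable_weak_decomp :: "'a mfamily set \<Rightarrow> bool" where
  "stable_weak_decomp UU \<longleftrightarrow> (\<forall>XX. weakly_decomposable_over XX UU \<longrightarrow> XX \<in> UU)"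

definition wFDC :: "'a mfamily set" where
  "wFDC = \<Inter>{UU. (\<forall>Z. uniformly_bounded Z \<longrightarrow> Z \<in> UU) \<and> stable_weak_decomp UU}"

text \<open>Straight FDC; the sequence R_1 < R_2 < ... is R 0 < R 1 < ... (shifted by one).\<close>
definition sFDC :: "'a mfamily \<Rightarrow> bool" where
  "sFDC XX \<longleftrightarrow>
     (\<forall>R :: nat \<Rightarrow> real. strict_mono R \<and> (\<forall>i. R i > 0) \<longrightarrow>
        (\<exists>(n::nat) (F :: nat \<Rightarrow> 'a mfamily). F 0 = XX \<and>
           (\<forall>i<n. r_decomposable (R i) (F i) (F (Suc i))) \<and> uniformly_bounded (F n)))"

definition sD :: "'a mfamily set" where
  "sD = {XX. sFDC XX}"

end

theory Submission
  imports Defs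
begin

text \<open>A \<open>(k + 1, r)\<close>-decomposition can be peeled one colour class at a time: keeping the
  first class and merging the remaining ones into a single piece gives an \<open>r\<close>-decomposition
  whose merged pieces carry \<open>(k, r)\<close>-decompositions. So a family that is \<open>(k + 1, r)\<close>-decomposable
  over \<open>Y\<close> reaches \<open>Y\<close> after \<open>k + 1\<close> successive \<open>r\<close>-decompositions. Given \<open>R 0 < R 1 < \<dots>\<close>
  and \<open>k\<close>-decomposability over \<open>sD\<close>, take \<open>r = R k\<close>: these steps are then \<open>R i\<close>-decompositions
  for \<open>i \<le> k\<close>, and the straight decomposition chain of \<open>Y \<in> sD\<close> for the shifted sequence
  \<open>R (k + 1), R (k + 2), \<dots>\<close> finishes the job.\<close>

lemma kr_decompositionI:
  assumes "mspace X = (\<Union>i<k. \<Union>(U i))"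
    and "\<And>i A B. i < k \<Longrightarrow> A \<in> U i \<Longrightarrow> B \<in> U i \<Longrightarrow> A \<noteq> B \<Longrightarrow> r_disjoint X r A B"
    and "\<And>i A. i < k \<Longrightarrow> A \<in> U i \<Longrightarrow> A \<subseteq> mspace X"
    and "\<And>i A. i < k \<Longrightarrow> A \<in> U i \<Longrightarrow> submetric X A \<in> Y"
  shows "kr_decomposition k r X Y"
  unfolding kr_decomposition_def using assms by (intro exI[of _ U]) auto

lemma kr_decompositionE:
  assumes "kr_decomposition k r X Y"
  obtains U where "mspace X = (\<Union>i<k. \<Union>(U i))"
    and "\<And>i A B. i < k \<Longrightarrow> A \<in> U i \<Longrightarrow> B \<in> U i \<Longrightarrow> A \<noteq> B \<Longrightarrow> r_disjoint X r A B"
    and "\<And>i A. i < k \<Longrightarrow> A \<in> U i \<Longrightarrow> A \<subseteq> mspace X"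
    and "\<And>i A. i < k \<Longrightarrow> A \<in> U i \<Longrightarrow> submetric X A \<in> Y"
  using assms unfolding kr_decomposition_def by metis

lemma r_disjoint_mono:
  assumes "r_disjoint X r A B" "r' \<le> r"
  shows "r_disjoint X r' A B"
  using assms unfolding r_disjoint_def by auto

lemma kr_decomposition_mono:
  assumes "kr_decomposition k r X Y" "k \<le> k'" "r' \<le> r" "Y \<subseteq> Y'"
  shows "kr_decomposition k' r' X Y'"
proof -
  obtain U where U: "mspace X = (\<Union>i<k. \<Union>(U i))"
    "\<And>i A B. i < k \<Longrightarrow> A \<in> U i \<Longrightarrow> B \<in> U i \<Longrightarrow> A \<noteq> B \<Longrightarrow> r_disjoint X r A B"
    "\<And>i A. i < k \<Longrightarrow> A \<in> U i \<Longrightarrow> A \<subseteq> mspace X"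
    "\<And>i A. i < k \<Longrightarrow> A \<in> U i \<Longrightarrow> submetric X A \<in> Y"
    using assms(1) by (rule kr_decompositionE) blast
  let ?U = "\<lambda>i. if i < k then U i else {}"
  show ?thesis
  proof (rule kr_decompositionI[where U = ?U])
    show "mspace X = (\<Union>i<k'. \<Union>(?U i))"
      using U(1) assms(2) by (auto intro!: bexI split: if_splits)
  next
    fix i A B assume "i < k'" "A \<in> ?U i" "B \<in> ?U i" "A \<noteq> B"
    then have "i < k" "A \<in> U i" "B \<in> U i"
      by (auto split: if_splits)
    then show "r_disjoint X r' A B"
      using U(2) \<open>A \<noteq> B\<close> assms(3) by (blast intro: r_disjoint_mono)
  next
    fix i A assume "i < k'" "A \<in> ?U i"
    then have "i < k" "A \<in> U i"
      by (auto split: if_splits)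
    then show "A \<subseteq> mspace X" "submetric X A \<in> Y'"
      using U(3,4) assms(4) by blast+
  qed
qed

lemma kr_decomposition_member:
  assumes "X \<in> Y" "0 < k"
  shows "kr_decomposition k r X Y"
proof (rule kr_decompositionI[where U = "\<lambda>i. if i = 0 then {mspace X} else {}"])
  show "mspace X = (\<Union>i<k. \<Union>(if i = 0 then {mspace X} else {}))"
    using assms(2) by (auto split: if_splits)
qed (use assms(1) in \<open>auto split: if_splits\<close>)

lemma kr_decomposition_zero: "kr_decomposition 0 r X Y \<Longrightarrow> mspace X = {}"
  unfolding kr_decomposition_def by auto

lemma r_disjoint_submetric [simp]: "r_disjoint (submetric Z W) r A B \<longleftrightarrow> r_disjoint Z r A B"
  by (simp add: r_disjoint_def)

lemma kr_decomposition_submetric_Union: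
  assumes "\<And>i A B. i < k \<Longrightarrow> A \<in> U i \<Longrightarrow> B \<in> U i \<Longrightarrow> A \<noteq> B \<Longrightarrow> r_disjoint Z r A B"
    and "\<And>i A. i < k \<Longrightarrow> A \<in> U i \<Longrightarrow> A \<subseteq> mspace Z"
    and "\<And>i A. i < k \<Longrightarrow> A \<in> U i \<Longrightarrow> submetric Z A \<in> Y"
  shows "kr_decomposition k r (submetric Z (\<Union>i<k. \<Union>(U i))) Y"
proof (rule kr_decompositionI[where U = U])
  let ?W = "\<Union>i<k. \<Union>(U i)"
  have "?W \<subseteq> mspace Z"
    using assms(2) by (intro UN_least Union_least) auto
  then show "mspace (submetric Z ?W) = ?W"
    by auto
  fix i A assume "i < k" "A \<in> U i"
  then have "A \<subseteq> ?W" by auto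
  then show "A \<subseteq> mspace (submetric Z ?W)" "submetric (submetric Z ?W) A \<in> Y"
    using assms(2,3)[OF \<open>i < k\<close> \<open>A \<in> U i\<close>] by (simp_all add: Int_absorb1)
qed (simp add: assms(1))

text \<open>Empty spaces are excluded so that the layer for \<open>k = 0\<close> is empty: they are exactly
  the spaces admitting a \<open>(0, r)\<close>-decomposition.\<close>
definition decomposable_spaces :: "nat \<Rightarrow> real \<Rightarrow> 'a mfamily \<Rightarrow> 'a mfamily" where
  "decomposable_spaces k r Y = {V. kr_decomposition k r V Y \<and> mspace V \<noteq> {}}"

lemma decomposable_spaces_0 [simp]: "decomposable_spaces 0 r Y = {}"
  unfolding decomposable_spaces_def using kr_decomposition_zero by blast

lemma kr_decomposition_Suc_split:
  assumes "kr_decomposition (Suc m) r Z Y"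
  shows "kr_decomposition 2 r Z (Y \<union> decomposable_spaces m r Y)"
proof -
  obtain U where U: "mspace Z = (\<Union>i<Suc m. \<Union>(U i))"
    "\<And>i A B. i < Suc m \<Longrightarrow> A \<in> U i \<Longrightarrow> B \<in> U i \<Longrightarrow> A \<noteq> B \<Longrightarrow> r_disjoint Z r A B"
    "\<And>i A. i < Suc m \<Longrightarrow> A \<in> U i \<Longrightarrow> A \<subseteq> mspace Z"
    "\<And>i A. i < Suc m \<Longrightarrow> A \<in> U i \<Longrightarrow> submetric Z A \<in> Y"
    using assms by (rule kr_decompositionE) blast
  define W where "W = (\<Union>i<m. \<Union>(U (Suc i)))"
  have Z_split: "mspace Z = \<Union>(U 0) \<union> W"
    unfolding U(1) W_def lessThan_Suc_eq_insert_0 by simp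
  have W_decomposition: "kr_decomposition m r (submetric Z W) Y"
    unfolding W_def by (rule kr_decomposition_submetric_Union) (meson Suc_mono U(2-4))+
  let ?U = "\<lambda>i::nat. if i = 0 then U 0 else {W} - {{}}"
  show ?thesis
  proof (rule kr_decompositionI[where U = ?U])
    show "mspace Z = (\<Union>i<2. \<Union>(?U i))"
      unfolding Z_split by (auto simp: numeral_2_eq_2 lessThan_Suc)
  next
    fix i A B assume "i < 2" "A \<in> ?U i" "B \<in> ?U i" "A \<noteq> B"
    then show "r_disjoint Z r A B"
      using U(2)[of 0] by (auto split: if_splits)
  next
    fix i A assume "i < 2" "A \<in> ?U i"
    then consider "A \<in> U 0" | "A = W" "W \<noteq> {}"
      by (auto split: if_splits)
    then have "A \<subseteq> mspace Z \<and> submetric Z A \<in> Y \<union> decomposable_spaces m r Y"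
    proof cases
      case 1
      then show ?thesis
        using U(3,4)[of 0] by simp
    next
      case 2
      moreover have "W \<subseteq> mspace Z"
        using Z_split by blast
      ultimately show ?thesis
        using W_decomposition by (simp add: decomposable_spaces_def Int_absorb2)
    qed
    then show "A \<subseteq> mspace Z" "submetric Z A \<in> Y \<union> decomposable_spaces m r Y"
      by simp_all
  qed
qed

lemma kr_decomposable_mono:
  assumes "kr_decomposable k r XX Y" "k \<le> k'" "r' \<le> r" "Y \<subseteq> Y'"
  shows "kr_decomposable k' r' XX Y'"
  unfolding kr_decomposable_def
proof
  fix X assume "X \<in> XX"
  with assms(1) have "kr_decomposition k r X Y"
    unfolding kr_decomposable_def by blast
  then show "kr_decomposition k' r' X Y'"
    using assms(2-4) by (rule kr_decomposition_mono)
qed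

lemma kr_decomposable_Suc_split:
  "kr_decomposable (Suc m) r XX Y \<Longrightarrow> r_decomposable r XX (Y \<union> decomposable_spaces m r Y)"
  unfolding kr_decomposable_def by (simp add: kr_decomposition_Suc_split)

lemma kr_decomposable_decomposable_spaces:
  "kr_decomposable (Suc m) r (Y \<union> decomposable_spaces (Suc m) r Y) Y"
  unfolding kr_decomposable_def decomposable_spaces_def
  by (auto intro: kr_decomposition_member)

lemma kr_decomposable_chain:
  assumes "kr_decomposable (Suc k) r XX Y"
  shows "\<exists>F. F 0 = XX \<and> F (Suc k) = Y \<and> (\<forall>i\<le>k. r_decomposable r (F i) (F (Suc i)))"
  using assms
proof (induction k arbitrary: XX)
  case 0
  then have "r_decomposable r XX Y"
    using kr_decomposable_Suc_split by fastforce
  then show ?case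
    by (intro exI[of _ "\<lambda>i. if i = 0 then XX else Y"]) simp
next
  case (Suc k)
  let ?L = "Y \<union> decomposable_spaces (Suc k) r Y"
  obtain F where F: "F 0 = ?L" "F (Suc k) = Y" "\<forall>i\<le>k. r_decomposable r (F i) (F (Suc i))"
    using Suc.IH kr_decomposable_decomposable_spaces by blast
  have XX_step: "r_decomposable r XX ?L"
    using Suc.prems by (rule kr_decomposable_Suc_split)
  have "r_decomposable r (case_nat XX F i) (case_nat XX F (Suc i))" if "i \<le> Suc k" for i
    using that F(1,3) XX_step by (cases i) auto
  with F(2) show ?case
    by (intro exI[of _ "case_nat XX F"]) auto
qed

lemma sFDC_prepend_chain:
  assumes "sFDC Y" "strict_mono R" "\<forall>i. 0 < R i"
    and "F 0 = XX" "F m = Y" "\<forall>i<m. r_decomposable (R i) (F i) (F (Suc i))"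
  shows "\<exists>n G. G 0 = XX \<and> (\<forall>i<n. r_decomposable (R i) (G i) (G (Suc i))) \<and> uniformly_bounded (G n)"
proof -
  have shifted: "strict_mono (\<lambda>i. R (m + i)) \<and> (\<forall>i. 0 < R (m + i))"
    using assms(2,3) unfolding strict_mono_def by simp
  obtain n F' where F': "F' 0 = Y" "\<forall>i<n. r_decomposable (R (m + i)) (F' i) (F' (Suc i))"
    "uniformly_bounded (F' n)"
    using assms(1)[unfolded sFDC_def, rule_format, OF shifted] by (elim exE conjE) (rule that)
  define G where "G j = (if j < m then F j else F' (j - m))" for j
  have "G 0 = XX"
    using assms(4,5) F'(1) by (cases m) (simp_all add: G_def)
  moreover have "r_decomposable (R i) (G i) (G (Suc i))" if "i < m + n" for i
  proof (cases "i < m")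
    case True
    then have "Suc i < m \<or> Suc i = m"
      by linarith
    then have "G (Suc i) = F (Suc i)"
      using assms(5) F'(1) by (auto simp: G_def)
    then show ?thesis
      using True assms(6) by (simp add: G_def)
  next
    case False
    then have "G i = F' (i - m)" "G (Suc i) = F' (Suc (i - m))"
      by (simp_all add: G_def Suc_diff_le)
    then show ?thesis
      using False that F'(2)[rule_format, of "i - m"] by simp
  qed
  moreover have "G (m + n) = F' n"
    by (simp add: G_def)
  ultimately show ?thesis
    using F'(3) by (intro exI[of _ "m + n"] exI[of _ G]) simp
qed

lemma uniformly_bounded_in_sD: "uniformly_bounded Z \<Longrightarrow> Z \<in> sD"
  unfolding sD_def sFDC_def by (auto intro!: exI[of _ 0] exI[of _ "\<lambda>_. Z"])

lemma stable_weak_decomp_sD: "stable_weak_decomp sD"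
  unfolding stable_weak_decomp_def
proof (intro allI impI)
  fix XX :: "'a mfamily"
  assume "weakly_decomposable_over XX sD"
  then obtain k where k: "k_decomposable_over k XX sD"
    unfolding weakly_decomposable_over_def by blast
  have "sFDC XX"
    unfolding sFDC_def
  proof (intro allI impI)
    fix R :: "nat \<Rightarrow> real"
    assume R: "strict_mono R \<and> (\<forall>i. 0 < R i)"
    then obtain Y where Y: "Y \<in> sD" "kr_decomposable k (R k) XX Y"
      using k unfolding k_decomposable_over_def by blast
    have "kr_decomposable (Suc k) (R k) XX Y"
      using Y(2) by (rule kr_decomposable_mono) simp_all
    then obtain F where F: "F 0 = XX" "F (Suc k) = Y"
      "\<forall>i\<le>k. r_decomposable (R k) (F i) (F (Suc i))"
      using kr_decomposable_chain by blast
    have "r_decomposable (R i) (F i) (F (Suc i))" if "i < Suc k" for i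
    proof -
      have "i \<le> k"
        using that by simp
      then have "r_decomposable (R k) (F i) (F (Suc i))" "R i \<le> R k"
        using F(3) R by (simp_all add: strict_mono_less_eq)
      then show ?thesis
        by (rule kr_decomposable_mono[OF _ order_refl _ order_refl])
    qed
    then show "\<exists>n F. F 0 = XX \<and> (\<forall>i<n. r_decomposable (R i) (F i) (F (Suc i))) \<and>
                 uniformly_bounded (F n)"
      using Y(1) R F(1,2) by (intro sFDC_prepend_chain[where F = F and m = "Suc k"]) (simp_all add: sD_def)
  qed
  then show "XX \<in> sD"
    by (simp add: sD_def)
qed

theorem proposition4p7:
  shows "stable_weak_decomp (sD :: 'a mfamily set) \<and> (wFDC :: 'a mfamily set) \<subseteq> sD"
proof
  show "stable_weak_decomp (sD :: 'a mfamily set)"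
    by (rule stable_weak_decomp_sD)
  then show "(wFDC :: 'a mfamily set) \<subseteq> sD"
    unfolding wFDC_def using uniformly_bounded_in_sD by (intro Inter_lower) blast
qed

end
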